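(* Let $k\le n$ be positive integers and let $A_1,\dots,A_m\in\mathbb{S}^n_+$ with $\dim\operatorname{span}\{A_1,\dots,A_m\}=2$. Let $\mathcal{X}=\{X\in\mathbb{S}^n_+:\operatorname{rank}(X)\le k,\ \|X\|_2\le1\}$, $\mathcal{C}=\{(z,X)\in\mathbb{R}\times\mathcal{X}: z\le\langle A_i,X\rangle\ \forall i\in[m]\}$ and $\mathcal{C}_{\mathrm{rel}}=\{(z,X)\in\mathbb{R}\times\operatorname{clconv}(\mathcal{X}): z\le\langle A_i,X\rangle\ \forall i\in[m]\}$. Then $\mathcal{C}_{\mathrm{rel}}=\operatorname{clconv}(\mathcal{C})$.
   Context: This concerns fair PCA: $\max\{z:(z,X)\in\mathcal{C}\}$, where $A_i$ is the covariance matrix of group $i$, and its Dantzig–Wolfe relaxation over $\mathcal{C}_{\mathrm{rel}}$. $\langle A,X\rangle=\operatorname{tr}(A^\top X)$, $\|X\|_2$ is the spectral norm, $\mathbb{S}^n_+$ denotes $n\times n$ positive semidefinite matrices, and $\operatorname{clconv}$ is the closed convex hull. *)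

theory Defs
  imports "HOL-Analysis.Analysis"
begin

definition psd :: "real^'n^'n \<Rightarrow> bool" where
  "psd X \<longleftrightarrow> transpose X = X \<and> (\<forall>x. 0 \<le> x \<bullet> (X *v x))"

definition minner :: "real^'n^'n \<Rightarrow> real^'n^'n \<Rightarrow> real" where
  "minner A X = trace (transpose A ** X)"

definition spec_norm :: "real^'n^'n \<Rightarrow> real" where
  "spec_norm X = onorm (\<lambda>x. X *v x)"

definition Xset :: "nat \<Rightarrow> (real^'n^'n) set" where
  "Xset k = {X. psd X \<and> rank X \<le> k \<and> spec_norm X \<le> 1}"

definition Cset :: "nat \<Rightarrow> nat \<Rightarrow> (nat \<Rightarrow> real^'n^'n) \<Rightarrow> (real \<times> (real^'n^'n)) set" where
  "Cset k m A = {(z, X). X \<in> Xset k \<and> (\<forall>i<m. z \<le> minner (A i) X)}"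

definition Crel :: "nat \<Rightarrow> nat \<Rightarrow> (nat \<Rightarrow> real^'n^'n) \<Rightarrow> (real \<times> (real^'n^'n)) set" where
  "Crel k m A = {(z, X). X \<in> closure (convex hull (Xset k)) \<and> (\<forall>i<m. z \<le> minner (A i) X)}"

end

theory Submission
  imports Defs
begin

text \<open>
  The Fantope \<open>F\<^sub>k = {P symmetric. 0 \<le> P \<le> I, tr P \<le> k}\<close> is compact, convex and contains
  \<open>X\<^sub>k\<close>, hence \<open>clconv X\<^sub>k\<close>. An extreme point \<open>P\<close> of a hyperplane section \<open>F\<^sub>k \<inter> {\<langle>M, Y\<rangle> = 0}\<close> has
  at most one eigenvalue strictly between 0 and 1: eigenvectors \<open>b\<^sub>1, b\<^sub>2\<close> of two such eigenvalues
  leave room for a nonzero symmetric perturbation supported on \<open>span {b\<^sub>1, b\<^sub>2}\<close>, traceless and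
  orthogonal to \<open>M\<close>, that can be added and subtracted. The trace bound then caps the rank at \<open>k\<close>, so
  by Krein-Milman every hyperplane section of \<open>F\<^sub>k\<close> lies in the convex hull of its points in \<open>X\<^sub>k\<close>.

  Now let all \<open>A\<^sub>i\<close> lie in the span of two PSD matrices \<open>U, V\<close> and let \<open>(z, P) \<in> C\<^sub>r\<^sub>e\<^sub>l\<close>. Cutting
  with \<open>M = \<langle>V, P\<rangle> U - \<langle>U, P\<rangle> V\<close> writes \<open>P\<close> as a convex combination of points \<open>Y \<in> X\<^sub>k\<close> with
  \<open>(\<langle>U, Y\<rangle>, \<langle>V, Y\<rangle>) = t\<^sub>Y (\<langle>U, P\<rangle>, \<langle>V, P\<rangle>)\<close> for some \<open>t\<^sub>Y \<ge> 0\<close>; then \<open>(t\<^sub>Y z, Y) \<in> C\<close>, and these points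
  have the same convex combination \<open>(z, P)\<close>, as \<open>Y \<mapsto> t\<^sub>Y\<close> is linear. When \<open>\<langle>U, P\<rangle> = \<langle>V, P\<rangle> = 0\<close>
  one cuts with \<open>M = U + V\<close> instead and uses the points \<open>(z, Y)\<close>.
\<close>

section \<open>Orthonormal eigenbases of self-adjoint maps\<close>

lemma linear_coeff_eq_0_if_quadratic_nonpos:
  fixes c d :: real
  assumes "\<And>t. 2 * t * c + t\<^sup>2 * d \<le> 0"
  shows "c = 0"
proof (rule ccontr)
  assume "c \<noteq> 0"
  define e where "e = \<bar>d\<bar> + 1"
  have e: "e > 0" "2 * e + d > 0" unfolding e_def by (simp_all add: abs_if)
  have "(2 * (c / e) * c + (c / e)\<^sup>2 * d) * e\<^sup>2 \<le> 0"
    using assms[of "c / e"] by (simp add: mult_nonpos_nonneg)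
  also have "(2 * (c / e) * c + (c / e)\<^sup>2 * d) * e\<^sup>2 = c\<^sup>2 * (2 * e + d)"
    using e by (simp add: field_simps power2_eq_square)
  finally show False using \<open>c \<noteq> 0\<close> e by (simp add: mult_le_0_iff)
qed

lemma selfadjoint_quadratic_form_add:
  fixes f :: "'a::real_inner \<Rightarrow> 'a"
  assumes "linear f" and "\<And>x y. f x \<bullet> y = x \<bullet> f y"
  shows "(x + t *\<^sub>R y) \<bullet> f (x + t *\<^sub>R y) = x \<bullet> f x + 2 * t * (y \<bullet> f x) + t\<^sup>2 * (y \<bullet> f y)"
  using assms(2)[of y x]
  by (simp add: linear_add[OF assms(1)] linear_scale[OF assms(1)] inner_add_left inner_add_right
      inner_commute power2_eq_square algebra_simps)

lemma selfadjoint_maximizer_is_eigenvector: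
  fixes f :: "'a::euclidean_space \<Rightarrow> 'a"
  assumes lin: "linear f" and adj: "\<And>x y. f x \<bullet> y = x \<bullet> f y"
    and S: "subspace S" "f ` S \<subseteq> S" and v: "v \<in> S" "norm v = 1"
    and max: "\<And>u. u \<in> S \<Longrightarrow> norm u = 1 \<Longrightarrow> u \<bullet> f u \<le> v \<bullet> f v"
  shows "f v = (v \<bullet> f v) *\<^sub>R v"
proof -
  let ?q = "\<lambda>x. x \<bullet> f x"
  define l where "l = ?q v"
  have vv: "v \<bullet> v = 1" using v by (simp add: dot_square_norm)
  have bound: "?q u \<le> l * (u \<bullet> u)" if "u \<in> S" for u
  proof (cases "u = 0")
    case False
    have "?q (u /\<^sub>R norm u) \<le> l"
      unfolding l_def using that False S by (intro max) (simp_all add: subspace_scale)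
    then show ?thesis
      using False by (simp add: linear_scale[OF lin] dot_square_norm field_simps power2_eq_square)
  qed simp
  have orth: "w \<bullet> f v = 0" if w: "w \<in> S" "w \<bullet> v = 0" for w
  proof (rule linear_coeff_eq_0_if_quadratic_nonpos)
    fix t :: real
    have "v + t *\<^sub>R w \<in> S" using w v S by (simp add: subspace_add subspace_scale)
    then have "?q (v + t *\<^sub>R w) \<le> l * ((v + t *\<^sub>R w) \<bullet> (v + t *\<^sub>R w))" by (rule bound)
    then show "2 * t * (w \<bullet> f v) + t\<^sup>2 * (?q w - l * (w \<bullet> w)) \<le> 0"
      using w(2) vv unfolding selfadjoint_quadratic_form_add[OF lin adj]
      by (simp add: l_def inner_add_left inner_add_right inner_commute power2_eq_square
          algebra_simps)
  qed
  define w where "w = f v - l *\<^sub>R v"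
  have "w \<in> S" unfolding w_def using S v by (auto simp: subspace_diff subspace_scale)
  moreover have "w \<bullet> v = 0"
    unfolding w_def using vv adj[of v v] by (simp add: l_def inner_diff_left)
  ultimately have "w \<bullet> w = 0" using orth unfolding w_def by (simp add: inner_diff_right)
  then show ?thesis unfolding w_def l_def by simp
qed

lemma selfadjoint_eigenvector_in_subspace:
  fixes f :: "'a::euclidean_space \<Rightarrow> 'a"
  assumes lin: "linear f" and adj: "\<And>x y. f x \<bullet> y = x \<bullet> f y"
    and S: "subspace S" "f ` S \<subseteq> S" "S \<noteq> {0}"
  obtains v where "v \<in> S" "norm v = 1" "f v = (v \<bullet> f v) *\<^sub>R v"
proof -
  let ?q = "\<lambda>x. x \<bullet> f x" and ?K = "S \<inter> sphere 0 1"
  obtain x where "x \<in> S" "x \<noteq> 0" using S subspace_0 by blast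
  then have "x /\<^sub>R norm x \<in> ?K" using S by (simp add: subspace_scale)
  then have "?K \<noteq> {}" by blast
  moreover have "compact ?K"
    using closed_subspace[OF S(1)] compact_sphere by (rule closed_Int_compact)
  moreover have "continuous_on ?K ?q"
    using lin
    by (intro continuous_intros linear_continuous_on) (simp add: linear_conv_bounded_linear)
  ultimately obtain v where "v \<in> ?K" and max: "\<And>u. u \<in> ?K \<Longrightarrow> ?q u \<le> ?q v"
    using continuous_attains_sup[of ?K ?q] by blast
  then have v: "v \<in> S" "norm v = 1" by auto
  moreover have "f v = (v \<bullet> f v) *\<^sub>R v"
    using max by (intro selfadjoint_maximizer_is_eigenvector[OF lin adj S(1,2) v]) simp
  ultimately show ?thesis by (rule that)
qed

lemma selfadjoint_orthogonal_complement_eigenvector: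
  fixes f :: "'a::euclidean_space \<Rightarrow> 'a"
  assumes adj: "\<And>x y. f x \<bullet> y = x \<bullet> f y" and S: "subspace S" "f ` S \<subseteq> S"
    and v: "v \<in> S" "v \<bullet> v = 1" "f v = c *\<^sub>R v"
  shows "subspace {x\<in>S. v \<bullet> x = 0}" "f ` {x\<in>S. v \<bullet> x = 0} \<subseteq> {x\<in>S. v \<bullet> x = 0}"
    "dim {x\<in>S. v \<bullet> x = 0} < dim S"
proof -
  let ?S' = "{x\<in>S. v \<bullet> x = 0}"
  show S': "subspace ?S'" using S(1) by (auto simp: subspace_def inner_add_right)
  show "f ` ?S' \<subseteq> ?S'"
  proof
    fix y assume "y \<in> f ` ?S'"
    then obtain x where x: "x \<in> S" "v \<bullet> x = 0" "y = f x" by blast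
    have "v \<bullet> f x = f v \<bullet> x" by (rule adj[symmetric])
    also have "\<dots> = 0" using x(2) v(3) by simp
    finally show "y \<in> ?S'" using x S(2) by auto
  qed
  show "dim ?S' < dim S"
  proof (rule dim_psubset)
    have "v \<notin> ?S'" using v(2) by simp
    then have "?S' \<subset> S" using v(1) by blast
    then show "span ?S' \<subset> span S" using S' S(1) by (simp add: span_eq_iff[THEN iffD2])
  qed
qed

lemma selfadjoint_orthonormal_eigenbasis_subspace:
  fixes f :: "'a::euclidean_space \<Rightarrow> 'a"
  assumes lin: "linear f" and adj: "\<And>x y. f x \<bullet> y = x \<bullet> f y"
    and "subspace S" "f ` S \<subseteq> S"
  shows "\<exists>B. B \<subseteq> S \<and> finite B \<and> pairwise orthogonal B \<and> (\<forall>b\<in>B. norm b = 1) \<and> span B = S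
    \<and> (\<forall>b\<in>B. f b = (b \<bullet> f b) *\<^sub>R b)"
  using assms(3,4)
proof (induction "dim S" arbitrary: S rule: less_induct)
  case less
  show ?case
  proof (cases "S = {0}")
    case True
    then show ?thesis by (intro exI[of _ "{}"]) auto
  next
    case False
    obtain v where v: "v \<in> S" "norm v = 1" "f v = (v \<bullet> f v) *\<^sub>R v"
      using selfadjoint_eigenvector_in_subspace[OF lin adj less.prems False] .
    have vv: "v \<bullet> v = 1" using v by (simp add: dot_square_norm)
    define S' where "S' = {x\<in>S. v \<bullet> x = 0}"
    have S': "dim S' < dim S" "subspace S'" "f ` S' \<subseteq> S'"
      using selfadjoint_orthogonal_complement_eigenvector[OF adj less.prems v(1) vv v(3)]
      unfolding S'_def by simp_all
    obtain B where B: "B \<subseteq> S'" "finite B" "pairwise orthogonal B" "\<forall>b\<in>B. norm b = 1"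
      "span B = S'" "\<forall>b\<in>B. f b = (b \<bullet> f b) *\<^sub>R b"
      using less.hyps[OF S'] by blast
    have "pairwise orthogonal (insert v B)"
      using B(1,3) unfolding S'_def pairwise_insert by (auto simp: orthogonal_def inner_commute)
    moreover have "span (insert v B) = S"
    proof
      show "span (insert v B) \<subseteq> S"
        using B(1) v(1) less.prems(1) unfolding S'_def by (intro span_minimal) auto
      show "S \<subseteq> span (insert v B)"
      proof
        fix x assume "x \<in> S"
        then have "x - (v \<bullet> x) *\<^sub>R v \<in> span B"
          using v(1) vv less.prems(1) B(5) unfolding S'_def
          by (simp add: subspace_diff subspace_scale inner_diff_right)
        then show "x \<in> span (insert v B)" by (metis span_breakdown_eq)
      qed
    qed
    ultimately show ?thesis
      using B v unfolding S'_def by (intro exI[of _ "insert v B"]) auto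
  qed
qed

definition orthonormal_basis :: "'a::euclidean_space set \<Rightarrow> bool" where
  "orthonormal_basis B \<longleftrightarrow> finite B \<and> pairwise orthogonal B \<and> (\<forall>b\<in>B. norm b = 1) \<and> span B = UNIV"

lemma selfadjoint_orthonormal_eigenbasis:
  fixes f :: "'a::euclidean_space \<Rightarrow> 'a"
  assumes "linear f" and "\<And>x y. f x \<bullet> y = x \<bullet> f y"
  obtains B where "orthonormal_basis B" "\<forall>b\<in>B. f b = (b \<bullet> f b) *\<^sub>R b"
  using selfadjoint_orthonormal_eigenbasis_subspace[OF assms subspace_UNIV]
  unfolding orthonormal_basis_def by auto

lemma orthonormal_basis_inner:
  assumes "orthonormal_basis B" "b \<in> B" "c \<in> B"
  shows "b \<bullet> c = (if b = c then 1 else 0)"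
  using assms unfolding orthonormal_basis_def pairwise_def orthogonal_def
  by (auto simp: dot_square_norm)

lemma orthonormal_basis_expansion:
  assumes "orthonormal_basis B"
  shows "(\<Sum>b\<in>B. (x \<bullet> b) *\<^sub>R b) = x"
  using orthonormal_basis_expand[of B x] assms unfolding orthonormal_basis_def by auto

lemma orthonormal_basis_parseval:
  assumes "orthonormal_basis B"
  shows "x \<bullet> y = (\<Sum>b\<in>B. (x \<bullet> b) * (y \<bullet> b))"
proof -
  have "x \<bullet> y = x \<bullet> (\<Sum>b\<in>B. (y \<bullet> b) *\<^sub>R b)" using orthonormal_basis_expansion[OF assms] by simp
  then show ?thesis by (simp add: inner_sum_right mult.commute)
qed

lemma orthonormal_basis_Basis: "orthonormal_basis (Basis :: 'a::euclidean_space set)"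
  unfolding orthonormal_basis_def pairwise_def orthogonal_def
  using inner_not_same_Basis by auto

lemma sum_inner_orthonormal_basis_eq:
  fixes f :: "'a::euclidean_space \<Rightarrow> 'a"
  assumes "linear f" "orthonormal_basis B" "orthonormal_basis C"
  shows "(\<Sum>b\<in>B. b \<bullet> f b) = (\<Sum>c\<in>C. c \<bullet> f c)"
proof -
  have "(\<Sum>b\<in>B. b \<bullet> f b) = (\<Sum>b\<in>B. \<Sum>c\<in>C. (b \<bullet> c) * (f b \<bullet> c))"
    by (rule sum.cong[OF refl], rule orthonormal_basis_parseval[OF assms(3)])
  also have "\<dots> = (\<Sum>c\<in>C. \<Sum>b\<in>B. (c \<bullet> b) * (adjoint f c \<bullet> b))"
    by (subst sum.swap, intro sum.cong refl) (metis adjoint_works[OF assms(1)] inner_commute)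
  also have "\<dots> = (\<Sum>c\<in>C. c \<bullet> adjoint f c)"
    by (rule sum.cong[OF refl], rule orthonormal_basis_parseval[OF assms(2), symmetric])
  finally show ?thesis by (simp add: adjoint_works[OF assms(1)] inner_commute)
qed

lemma transpose_add: "transpose ((P::'a::semiring_1^'n^'m) + Q) = transpose P + transpose Q"
  by (simp add: vec_eq_iff transpose_def)

lemma trace_scaleR: "trace (c *\<^sub>R (P::real^'n^'n)) = c * trace P"
  by (simp add: trace_def sum_distrib_left)

lemma linear_transpose: "linear (transpose :: real^'n^'m \<Rightarrow> real^'m^'n)"
  by (rule linearI) (simp_all add: transpose_add transpose_scalar)

lemma linear_trace: "linear (trace :: real^'n^'n \<Rightarrow> real)"
  by (rule linearI) (simp_all add: trace_add trace_scaleR)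

lemma linear_bilinear_form: "linear (\<lambda>P::real^'n^'m. x \<bullet> (P *v y))"
  by (rule linearI)
    (simp_all add: matrix_vector_mult_add_rdistrib scaleR_matrix_vector_assoc[symmetric]
      inner_add_right)

lemma matrix_vector_inner_symmetric:
  fixes P :: "real^'n^'n"
  assumes "transpose P = P"
  shows "(P *v x) \<bullet> y = x \<bullet> (P *v y)"
  by (metis assms dot_lmul_matrix inner_commute transpose_matrix_vector)

lemma symmetric_matrix_orthonormal_eigenbasis:
  fixes P :: "real^'n^'n"
  assumes "transpose P = P"
  obtains B l where "orthonormal_basis B" "\<forall>b\<in>B. P *v b = l b *\<^sub>R b"
proof (rule selfadjoint_orthonormal_eigenbasis[OF matrix_vector_mul_linear])
  show "(P *v x) \<bullet> y = x \<bullet> (P *v y)" for x y by (rule matrix_vector_inner_symmetric[OF assms])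
qed (rule that)

lemma inner_axis_matrix_vector_axis: "axis i 1 \<bullet> ((P::real^'n^'m) *v axis j 1) = P $ i $ j"
  by (simp add: inner_axis' matrix_vector_mult_basis column_def)

lemma trace_eq_sum_Basis: "trace (P::real^'n^'n) = (\<Sum>c\<in>Basis. c \<bullet> (P *v c))"
proof -
  have Basis: "(Basis :: (real^'n) set) = range (\<lambda>i. axis i 1)" by (auto simp: Basis_vec_def)
  have "inj (\<lambda>i::'n. axis i (1::real))" by (auto simp: inj_def axis_eq_axis)
  then show ?thesis
    unfolding Basis trace_def by (simp add: sum.reindex inner_axis_matrix_vector_axis)
qed

lemma trace_eq_sum_orthonormal_basis:
  fixes P :: "real^'n^'n"
  assumes "orthonormal_basis B"
  shows "trace P = (\<Sum>b\<in>B. b \<bullet> (P *v b))"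
  unfolding trace_eq_sum_Basis
  using sum_inner_orthonormal_basis_eq[OF matrix_vector_mul_linear orthonormal_basis_Basis assms] .

lemma eigenbasis_matrix_vector_mult:
  fixes P :: "real^'n^'n"
  assumes "orthonormal_basis B" "\<forall>b\<in>B. P *v b = l b *\<^sub>R b"
  shows "P *v x = (\<Sum>b\<in>B. (l b * (x \<bullet> b)) *\<^sub>R b)"
proof -
  have "P *v x = P *v (\<Sum>b\<in>B. (x \<bullet> b) *\<^sub>R b)" by (simp add: orthonormal_basis_expansion[OF assms(1)])
  also have "\<dots> = (\<Sum>b\<in>B. (l b * (x \<bullet> b)) *\<^sub>R b)"
    by (simp add: linear_sum[OF matrix_vector_mul_linear] matrix_vector_mult_scaleR assms(2)
        mult.commute)
  finally show ?thesis .
qed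

lemma eigenbasis_inner:
  fixes P :: "real^'n^'n"
  assumes "orthonormal_basis B" "\<forall>b\<in>B. P *v b = l b *\<^sub>R b" "c \<in> B"
  shows "(P *v x) \<bullet> c = l c * (x \<bullet> c)"
proof -
  have "(P *v x) \<bullet> c = (\<Sum>b\<in>B. (l b * (x \<bullet> b)) * (b \<bullet> c))"
    by (simp add: eigenbasis_matrix_vector_mult[OF assms(1,2)] inner_sum_left)
  also have "\<dots> = l c * (x \<bullet> c)"
    using assms(1,3)
    by (simp add: orthonormal_basis_inner orthonormal_basis_def if_distrib sum.delta' cong: if_cong)
  finally show ?thesis .
qed

lemma eigenbasis_eigenvalue:
  fixes P :: "real^'n^'n"
  assumes "orthonormal_basis B" "\<forall>b\<in>B. P *v b = l b *\<^sub>R b" "b \<in> B"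
  shows "l b = b \<bullet> (P *v b)"
  using eigenbasis_inner[OF assms, of b] orthonormal_basis_inner[OF assms(1,3,3)]
  by (simp add: inner_commute)

lemma eigenbasis_quadratic_form:
  fixes P :: "real^'n^'n"
  assumes "orthonormal_basis B" "\<forall>b\<in>B. P *v b = l b *\<^sub>R b"
  shows "x \<bullet> (P *v x) = (\<Sum>b\<in>B. l b * (x \<bullet> b)\<^sup>2)"
  using orthonormal_basis_parseval[OF assms(1), of x "P *v x"]
  by (simp add: eigenbasis_inner[OF assms] power2_eq_square mult_ac)

lemma eigenbasis_quadratic_form_ge:
  fixes P :: "real^'n^'n"
  assumes "orthonormal_basis B" "\<forall>b\<in>B. P *v b = l b *\<^sub>R b" "\<forall>b\<in>B. 0 \<le> l b"
    and "b1 \<in> B" "b2 \<in> B" "b1 \<noteq> b2" "\<mu> \<le> l b1" "\<mu> \<le> l b2"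
  shows "\<mu> * ((x \<bullet> b1)\<^sup>2 + (x \<bullet> b2)\<^sup>2) \<le> x \<bullet> (P *v x)"
proof -
  have "\<mu> * ((x \<bullet> b1)\<^sup>2 + (x \<bullet> b2)\<^sup>2) \<le> (\<Sum>b\<in>{b1, b2}. l b * (x \<bullet> b)\<^sup>2)"
    using assms(6-8) by (simp add: distrib_left add_mono mult_right_mono)
  also have "\<dots> \<le> (\<Sum>b\<in>B. l b * (x \<bullet> b)\<^sup>2)"
    using assms(1,3-5) unfolding orthonormal_basis_def by (intro sum_mono2) auto
  also have "\<dots> = x \<bullet> (P *v x)" by (rule eigenbasis_quadratic_form[OF assms(1,2), symmetric])
  finally show ?thesis .
qed

lemma eigenbasis_trace:
  fixes P :: "real^'n^'n"
  assumes "orthonormal_basis B" "\<forall>b\<in>B. P *v b = l b *\<^sub>R b"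
  shows "trace P = (\<Sum>b\<in>B. l b)"
  unfolding trace_eq_sum_orthonormal_basis[OF assms(1)]
  using eigenbasis_eigenvalue[OF assms] by simp

lemma eigenbasis_norm_le:
  fixes P :: "real^'n^'n"
  assumes "orthonormal_basis B" "\<forall>b\<in>B. P *v b = l b *\<^sub>R b" "\<forall>b\<in>B. \<bar>l b\<bar> \<le> 1"
  shows "norm (P *v x) \<le> norm x"
proof -
  have "(P *v x) \<bullet> (P *v x) = (\<Sum>b\<in>B. (l b)\<^sup>2 * (x \<bullet> b)\<^sup>2)"
    using orthonormal_basis_parseval[OF assms(1), of "P *v x" "P *v x"]
    by (simp add: eigenbasis_inner[OF assms(1,2)] power2_eq_square mult_ac)
  also have "\<dots> \<le> (\<Sum>b\<in>B. (x \<bullet> b)\<^sup>2)"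
    using assms(3) by (intro sum_mono mult_left_le_one_le) (auto simp: abs_square_le_1)
  also have "\<dots> = x \<bullet> x"
    using orthonormal_basis_parseval[OF assms(1), of x x] by (simp add: power2_eq_square)
  finally show ?thesis by (simp add: norm_le)
qed

lemma eigenbasis_rank:
  fixes P :: "real^'n^'n"
  assumes "orthonormal_basis B" "\<forall>b\<in>B. P *v b = l b *\<^sub>R b"
  shows "rank P = card {b\<in>B. l b \<noteq> 0}"
proof -
  let ?N = "{b\<in>B. l b \<noteq> 0}"
  have fin: "finite ?N" using assms(1) unfolding orthonormal_basis_def by auto
  have "range ((*v) P) \<subseteq> span ?N"
  proof
    fix y assume "y \<in> range ((*v) P)"
    then obtain x where "y = P *v x" by auto
    also have "\<dots> = (\<Sum>b\<in>?N. (l b * (x \<bullet> b)) *\<^sub>R b)"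
      using assms(1) unfolding eigenbasis_matrix_vector_mult[OF assms] orthonormal_basis_def
      by (intro sum.mono_neutral_right) auto
    also have "\<dots> \<in> span ?N" by (rule span_sum, rule span_scale, rule span_base)
    finally show "y \<in> span ?N" .
  qed
  then have "dim (range ((*v) P)) \<le> card ?N" using fin by (rule dim_le_card)
  moreover have "card ?N \<le> dim (range ((*v) P))"
  proof (rule independent_card_le_dim)
    show "?N \<subseteq> range ((*v) P)"
    proof
      fix b assume b: "b \<in> ?N"
      then have "P *v ((1 / l b) *\<^sub>R b) = b" by (simp add: matrix_vector_mult_scaleR assms(2))
      then show "b \<in> range ((*v) P)" by (metis rangeI)
    qed
    show "independent ?N"
      using assms(1) unfolding orthonormal_basis_def pairwise_def
      by (intro pairwise_orthogonal_independent) (auto simp: pairwise_def)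
  qed
  ultimately show ?thesis by (simp add: rank_dim_range)
qed

lemma psd_eigenvalue_nonneg:
  fixes P :: "real^'n^'n"
  assumes "psd P" "orthonormal_basis B" "\<forall>b\<in>B. P *v b = l b *\<^sub>R b" "b \<in> B"
  shows "0 \<le> l b"
  using assms(1) eigenbasis_eigenvalue[OF assms(2-4)] unfolding psd_def by simp

lemma eigenvalue_le_1_if_quadratic_form_le:
  fixes P :: "real^'n^'n"
  assumes "\<forall>x. x \<bullet> (P *v x) \<le> x \<bullet> x" "orthonormal_basis B" "\<forall>b\<in>B. P *v b = l b *\<^sub>R b" "b \<in> B"
  shows "l b \<le> 1"
  using assms(1)[rule_format, of b] orthonormal_basis_inner[OF assms(2,4,4)]
    eigenbasis_eigenvalue[OF assms(2-4)]
  by simp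

lemma quadratic_form_le_if_spec_norm_le_1:
  assumes "spec_norm P \<le> 1"
  shows "x \<bullet> (P *v x) \<le> x \<bullet> x"
proof -
  have "norm (P *v x) \<le> spec_norm P * norm x"
    unfolding spec_norm_def by (rule onorm) simp
  also have "\<dots> \<le> norm x" using assms mult_right_mono[of _ 1 "norm x"] by simp
  finally have "x \<bullet> (P *v x) \<le> norm x * norm x"
    using norm_cauchy_schwarz[of x "P *v x"] mult_left_mono[of _ _ "norm x"] by force
  then show ?thesis by (simp add: dot_square_norm power2_eq_square)
qed

lemma spec_norm_le_1_if_quadratic_form_le:
  fixes P :: "real^'n^'n"
  assumes "psd P" "\<forall>x. x \<bullet> (P *v x) \<le> x \<bullet> x"
  shows "spec_norm P \<le> 1"
proof -
  obtain B l where B: "orthonormal_basis B" "\<forall>b\<in>B. P *v b = l b *\<^sub>R b"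
    using assms(1) unfolding psd_def by (metis symmetric_matrix_orthonormal_eigenbasis)
  have "\<forall>b\<in>B. \<bar>l b\<bar> \<le> 1"
    using psd_eigenvalue_nonneg[OF assms(1) B] eigenvalue_le_1_if_quadratic_form_le[OF assms(2) B]
    by auto
  then show ?thesis
    unfolding spec_norm_def using eigenbasis_norm_le[OF B] by (intro onorm_le) simp
qed

lemma minner_eq_inner: "minner A X = A \<bullet> X"
  unfolding minner_def trace_def matrix_matrix_mult_def transpose_def inner_vec_def
  by simp (rule sum.swap)

lemma inner_psd_nonneg:
  fixes U Y :: "real^'n^'n"
  assumes "psd U" "psd Y"
  shows "0 \<le> U \<bullet> Y"
proof -
  have sym: "transpose U = U" using assms(1) unfolding psd_def by simp
  obtain B l where B: "orthonormal_basis B" "\<forall>b\<in>B. U *v b = l b *\<^sub>R b"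
    by (rule symmetric_matrix_orthonormal_eigenbasis[OF sym])
  have "U \<bullet> Y = trace (U ** Y)" using sym by (simp add: minner_eq_inner[symmetric] minner_def)
  also have "\<dots> = (\<Sum>b\<in>B. (U *v b) \<bullet> (Y *v b))"
    by (simp add: trace_eq_sum_orthonormal_basis[OF B(1)] matrix_vector_mul_assoc[symmetric]
        matrix_vector_inner_symmetric[OF sym])
  also have "\<dots> = (\<Sum>b\<in>B. l b * (b \<bullet> (Y *v b)))"
    using B(2) by (intro sum.cong) auto
  also have "\<dots> \<ge> 0"
    using assms(2) psd_eigenvalue_nonneg[OF assms(1) B] unfolding psd_def
    by (intro sum_nonneg mult_nonneg_nonneg) auto
  finally show ?thesis .
qed

section \<open>The Fantope\<close>

definition Fantope :: "nat \<Rightarrow> (real^'n^'n) set" where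
  "Fantope k = {P. psd P \<and> (\<forall>x. x \<bullet> (P *v x) \<le> x \<bullet> x) \<and> trace P \<le> real k}"

lemma Xset_subset_Fantope: "Xset k \<subseteq> Fantope k"
proof
  fix P :: "real^'n^'n" assume "P \<in> Xset k"
  then have psd: "psd P" and rank: "rank P \<le> k" and le: "\<forall>x. x \<bullet> (P *v x) \<le> x \<bullet> x"
    unfolding Xset_def using quadratic_form_le_if_spec_norm_le_1 by auto
  obtain B l where B: "orthonormal_basis B" "\<forall>b\<in>B. P *v b = l b *\<^sub>R b"
    using psd unfolding psd_def by (metis symmetric_matrix_orthonormal_eigenbasis)
  have fin: "finite B" using B(1) unfolding orthonormal_basis_def by auto
  have "trace P = (\<Sum>b\<in>{b\<in>B. l b \<noteq> 0}. l b)"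
    unfolding eigenbasis_trace[OF B] using fin by (intro sum.mono_neutral_right) auto
  also have "\<dots> \<le> card {b\<in>B. l b \<noteq> 0}"
    using eigenvalue_le_1_if_quadratic_form_le[OF le B] sum_mono[of _ l "\<lambda>_. 1"] by fastforce
  also have "\<dots> \<le> k" using rank eigenbasis_rank[OF B] by simp
  finally show "P \<in> Fantope k" using psd le unfolding Fantope_def by simp
qed

lemma convex_Fantope: "convex (Fantope k)"
proof (rule convexI)
  fix P Q :: "real^'n^'n" and u v :: real
  assume "P \<in> Fantope k" "Q \<in> Fantope k" and uv: "0 \<le> u" "0 \<le> v" "u + v = 1"
  then have P: "transpose P = P" "\<forall>x. 0 \<le> x \<bullet> (P *v x) \<and> x \<bullet> (P *v x) \<le> x \<bullet> x" "trace P \<le> k"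
    and Q: "transpose Q = Q" "\<forall>x. 0 \<le> x \<bullet> (Q *v x) \<and> x \<bullet> (Q *v x) \<le> x \<bullet> x" "trace Q \<le> k"
    unfolding Fantope_def psd_def by auto
  let ?R = "u *\<^sub>R P + v *\<^sub>R Q"
  have quad: "x \<bullet> (?R *v x) = u * (x \<bullet> (P *v x)) + v * (x \<bullet> (Q *v x))" for x
    by (simp add: matrix_vector_mult_add_rdistrib scaleR_matrix_vector_assoc[symmetric]
        inner_add_right)
  have "transpose ?R = ?R" using P(1) Q(1) by (simp add: transpose_add transpose_scalar)
  moreover have "0 \<le> x \<bullet> (?R *v x)" for x using P(2) Q(2) uv by (simp add: quad)
  moreover have "x \<bullet> (?R *v x) \<le> x \<bullet> x" for x
    using P(2) Q(2) uv convex_bound_le[of "x \<bullet> (P *v x)" "x \<bullet> x" "x \<bullet> (Q *v x)" u v]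
    by (simp add: quad)
  moreover have "trace ?R \<le> k"
    using P(3) Q(3) uv convex_bound_le[of "trace P" k "trace Q" u v]
    by (simp add: trace_add trace_scaleR)
  ultimately show "?R \<in> Fantope k" unfolding Fantope_def psd_def by blast
qed

lemma closed_Fantope: "closed (Fantope k)"
proof -
  have cont: "continuous_on UNIV f" if "linear f" for f :: "real^'n^'n \<Rightarrow> 'b::euclidean_space"
    using that by (simp add: linear_continuous_on linear_conv_bounded_linear)
  have "Fantope k = {P. transpose P = id P} \<inter> {P. trace P \<le> real k} \<inter>
      (\<Inter>x. {P. 0 \<le> x \<bullet> (P *v x)} \<inter> {P. x \<bullet> (P *v x) \<le> x \<bullet> x})"
    unfolding Fantope_def psd_def by auto
  also have "closed \<dots>"
    by (intro closed_Int closed_INT ballI closed_Collect_eq closed_Collect_le cont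
        continuous_on_const linear_transpose linear_trace linear_bilinear_form linear_id)
  finally show ?thesis .
qed

lemma bounded_Fantope: "bounded (Fantope k)"
proof -
  have "norm P \<le> real (CARD('n) * CARD('n))" if "P \<in> Fantope k" for P :: "real^'n^'n"
  proof -
    have "spec_norm P \<le> 1"
      using that unfolding Fantope_def by (auto intro: spec_norm_le_1_if_quadratic_form_le)
    then have entry: "\<bar>P $ i $ j\<bar> \<le> 1" for i j
      using matrix_component_le_onorm[of P i j] unfolding spec_norm_def by simp
    have "norm P \<le> (\<Sum>i\<in>UNIV. norm (P $ i))" unfolding norm_vec_def by (rule L2_set_le_sum) simp
    also have "\<dots> \<le> (\<Sum>i\<in>UNIV. \<Sum>j\<in>UNIV. \<bar>P $ i $ j\<bar>)" by (intro sum_mono norm_le_l1_cart)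
    also have "\<dots> \<le> (\<Sum>i\<in>(UNIV::'n set). \<Sum>j\<in>(UNIV::'n set). 1)" using entry by (intro sum_mono) auto
    finally show ?thesis by simp
  qed
  then show ?thesis unfolding bounded_iff by blast
qed

lemma compact_Fantope_slice: "compact (Fantope k \<inter> {Y. M \<bullet> Y = 0})"
  by (simp add: compact_eq_bounded_closed bounded_Int bounded_Fantope closed_Int closed_Fantope
      closed_hyperplane)

section \<open>Extreme points of hyperplane sections of the Fantope\<close>

definition outer_product :: "real^'n \<Rightarrow> real^'n \<Rightarrow> real^'n^'n" where
  "outer_product u v = (\<chi> i j. u $ i * v $ j)"

lemma outer_product_matrix_vector_mult: "outer_product u v *v x = (v \<bullet> x) *\<^sub>R u"
  by (simp add: vec_eq_iff outer_product_def matrix_vector_mult_def inner_vec_def sum_distrib_left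
      mult_ac)

lemma transpose_outer_product: "transpose (outer_product u v) = outer_product v u"
  by (simp add: vec_eq_iff outer_product_def transpose_def)

lemma trace_outer_product: "trace (outer_product u v) = u \<bullet> v"
  by (simp add: trace_def outer_product_def inner_vec_def)

lemma abs_binary_quadratic_form_le:
  fixes \<alpha> \<beta> \<gamma> a b :: real
  shows "\<bar>\<alpha> * a\<^sup>2 + \<beta> * b\<^sup>2 + 2 * \<gamma> * a * b\<bar> \<le> (\<bar>\<alpha>\<bar> + \<bar>\<beta>\<bar> + \<bar>\<gamma>\<bar>) * (a\<^sup>2 + b\<^sup>2)"
proof -
  have "2 * \<bar>a\<bar> * \<bar>b\<bar> \<le> a\<^sup>2 + b\<^sup>2"
    using sum_squares_bound[of "\<bar>a\<bar>" "\<bar>b\<bar>"] by simp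
  then have "\<bar>\<gamma>\<bar> * (2 * \<bar>a\<bar> * \<bar>b\<bar>) \<le> \<bar>\<gamma>\<bar> * (a\<^sup>2 + b\<^sup>2)" by (rule mult_left_mono) simp
  then have "\<bar>2 * \<gamma> * a * b\<bar> \<le> \<bar>\<gamma>\<bar> * (a\<^sup>2 + b\<^sup>2)" by (simp add: abs_mult mult_ac)
  moreover have "\<bar>\<alpha> * a\<^sup>2\<bar> \<le> \<bar>\<alpha>\<bar> * (a\<^sup>2 + b\<^sup>2)" "\<bar>\<beta> * b\<^sup>2\<bar> \<le> \<bar>\<beta>\<bar> * (a\<^sup>2 + b\<^sup>2)"
    by (simp_all add: abs_mult mult_left_mono)
  ultimately show ?thesis by (simp add: distrib_right) (smt (verit) abs_triangle_ineq)
qed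

lemma exists_traceless_perturbation:
  fixes b1 b2 :: "real^'n" and M :: "real^'n^'n"
  assumes "b1 \<bullet> b1 = 1" "b2 \<bullet> b2 = 1" "b1 \<bullet> b2 = 0"
  obtains D C where "D \<noteq> 0" "transpose D = D" "trace D = 0" "M \<bullet> D = 0"
    "\<And>x. \<bar>x \<bullet> (D *v x)\<bar> \<le> C * ((x \<bullet> b1)\<^sup>2 + (x \<bullet> b2)\<^sup>2)"
proof -
  let ?E1 = "outer_product b1 b1" and ?E2 = "outer_product b2 b2"
    and ?E3 = "outer_product b1 b2 + outer_product b2 b1"
  \<comment> \<open>Three unknowns against the two linear constraints on trace and \<open>M \<bullet> D\<close>.\<close>
  obtain \<alpha> \<beta> \<gamma> :: real where coeff: "\<alpha> + \<beta> = 0" "\<alpha> * (M \<bullet> ?E1) + \<beta> * (M \<bullet> ?E2) + \<gamma> * (M \<bullet> ?E3) = 0"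
    "\<alpha> \<noteq> 0 \<or> \<gamma> \<noteq> 0"
  proof (cases "M \<bullet> ?E3 = 0")
    case True
    then show ?thesis using that[of 0 0 1] by simp
  next
    case False
    then show ?thesis using that[of 1 "-1" "(M \<bullet> ?E2 - M \<bullet> ?E1) / (M \<bullet> ?E3)"] by simp
  qed
  define D where "D = \<alpha> *\<^sub>R ?E1 + \<beta> *\<^sub>R ?E2 + \<gamma> *\<^sub>R ?E3"
  have D_apply: "D *v x = (\<alpha> * (b1 \<bullet> x) + \<gamma> * (b2 \<bullet> x)) *\<^sub>R b1 + (\<beta> * (b2 \<bullet> x) + \<gamma> * (b1 \<bullet> x)) *\<^sub>R b2"
    for x
    by (simp add: D_def matrix_vector_mult_add_rdistrib scaleR_matrix_vector_assoc[symmetric]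
        outer_product_matrix_vector_mult algebra_simps)
  show ?thesis
  proof
    have "b1 \<bullet> (D *v b1) = \<alpha>" "b2 \<bullet> (D *v b1) = \<gamma>"
      using assms by (simp_all add: D_apply inner_add_right inner_commute)
    then show "D \<noteq> 0" using coeff(3) by auto
    show "transpose D = D"
      by (simp add: D_def transpose_add transpose_scalar transpose_outer_product)
    show "trace D = 0"
      using assms coeff(1)
      by (simp add: D_def trace_add trace_scaleR trace_outer_product inner_commute)
    show "M \<bullet> D = 0" using coeff(2) by (simp add: D_def inner_add_right)
    show "\<bar>x \<bullet> (D *v x)\<bar> \<le> (\<bar>\<alpha>\<bar> + \<bar>\<beta>\<bar> + \<bar>\<gamma>\<bar>) * ((x \<bullet> b1)\<^sup>2 + (x \<bullet> b2)\<^sup>2)" for x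
      using abs_binary_quadratic_form_le[of \<alpha> "x \<bullet> b1" \<beta> "x \<bullet> b2" \<gamma>]
      by (simp add: D_apply inner_add_right inner_commute power2_eq_square algebra_simps)
  qed
qed

lemma Fantope_eigenvalue_margin:
  fixes P :: "real^'n^'n"
  assumes P: "P \<in> Fantope k" and B: "orthonormal_basis B" "\<forall>b\<in>B. P *v b = l b *\<^sub>R b"
    and b: "b1 \<in> B" "b2 \<in> B" "b1 \<noteq> b2" "l b1 \<in> {0<..<1}" "l b2 \<in> {0<..<1}"
  obtains \<mu> where "\<mu> > 0"
    "\<And>x. \<mu> * ((x \<bullet> b1)\<^sup>2 + (x \<bullet> b2)\<^sup>2) \<le> x \<bullet> (P *v x)"
    "\<And>x. \<mu> * ((x \<bullet> b1)\<^sup>2 + (x \<bullet> b2)\<^sup>2) \<le> x \<bullet> x - x \<bullet> (P *v x)"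
proof
  have psd: "psd P" and le: "\<forall>x. x \<bullet> (P *v x) \<le> x \<bullet> x"
    using P unfolding Fantope_def by auto
  have l01: "\<forall>b\<in>B. 0 \<le> l b" "\<forall>b\<in>B. 0 \<le> 1 - l b"
    using psd_eigenvalue_nonneg[OF psd B] eigenvalue_le_1_if_quadratic_form_le[OF le B] by auto
  define \<mu> where "\<mu> = min (min (l b1) (l b2)) (min (1 - l b1) (1 - l b2))"
  show "\<mu> > 0" using b unfolding \<mu>_def by auto
  show "\<mu> * ((x \<bullet> b1)\<^sup>2 + (x \<bullet> b2)\<^sup>2) \<le> x \<bullet> (P *v x)" for x
    using eigenbasis_quadratic_form_ge[OF B l01(1) b(1-3), of \<mu>] unfolding \<mu>_def by simp
  have "\<forall>b\<in>B. (mat 1 - P) *v b = (1 - l b) *\<^sub>R b"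
    using B(2) by (simp add: matrix_vector_mult_diff_rdistrib algebra_simps)
  from eigenbasis_quadratic_form_ge[OF B(1) this l01(2) b(1-3), of \<mu>]
  show "\<mu> * ((x \<bullet> b1)\<^sup>2 + (x \<bullet> b2)\<^sup>2) \<le> x \<bullet> x - x \<bullet> (P *v x)" for x
    unfolding \<mu>_def by (simp add: matrix_vector_mult_diff_rdistrib inner_diff_right)
qed

lemma Fantope_perturbation:
  fixes P D :: "real^'n^'n"
  assumes P: "P \<in> Fantope k" and B: "orthonormal_basis B" "\<forall>b\<in>B. P *v b = l b *\<^sub>R b"
    and b: "b1 \<in> B" "b2 \<in> B" "b1 \<noteq> b2" "l b1 \<in> {0<..<1}" "l b2 \<in> {0<..<1}"
    and D: "transpose D = D" "trace D = 0" "\<And>x. \<bar>x \<bullet> (D *v x)\<bar> \<le> C * ((x \<bullet> b1)\<^sup>2 + (x \<bullet> b2)\<^sup>2)"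
  obtains \<epsilon> where "\<epsilon> > 0" "\<And>s. \<bar>s\<bar> \<le> \<epsilon> \<Longrightarrow> P + s *\<^sub>R D \<in> Fantope k"
proof -
  obtain \<mu> where \<mu>: "\<mu> > 0"
    and lower: "\<And>x. \<mu> * ((x \<bullet> b1)\<^sup>2 + (x \<bullet> b2)\<^sup>2) \<le> x \<bullet> (P *v x)"
    and upper: "\<And>x. \<mu> * ((x \<bullet> b1)\<^sup>2 + (x \<bullet> b2)\<^sup>2) \<le> x \<bullet> x - x \<bullet> (P *v x)"
    using Fantope_eigenvalue_margin[OF P B b] by blast
  have "P + s *\<^sub>R D \<in> Fantope k" if s: "\<bar>s\<bar> \<le> \<mu> / (\<bar>C\<bar> + 1)" for s
  proof -
    have small: "\<bar>s * (x \<bullet> (D *v x))\<bar> \<le> \<mu> * ((x \<bullet> b1)\<^sup>2 + (x \<bullet> b2)\<^sup>2)" for x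
    proof -
      have "C * ((x \<bullet> b1)\<^sup>2 + (x \<bullet> b2)\<^sup>2) \<le> \<bar>C\<bar> * ((x \<bullet> b1)\<^sup>2 + (x \<bullet> b2)\<^sup>2)"
        by (rule mult_right_mono) auto
      then have "\<bar>s * (x \<bullet> (D *v x))\<bar> \<le> \<bar>s\<bar> * (\<bar>C\<bar> * ((x \<bullet> b1)\<^sup>2 + (x \<bullet> b2)\<^sup>2))"
        using D(3)[of x] by (simp add: abs_mult mult_left_mono)
      also have "\<dots> \<le> \<mu> / (\<bar>C\<bar> + 1) * ((\<bar>C\<bar> + 1) * ((x \<bullet> b1)\<^sup>2 + (x \<bullet> b2)\<^sup>2))"
        using s \<mu> by (intro mult_mono) (auto simp: distrib_right)
      finally show ?thesis by (simp add: add_nonneg_eq_0_iff)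
    qed
    have quad: "x \<bullet> ((P + s *\<^sub>R D) *v x) = x \<bullet> (P *v x) + s * (x \<bullet> (D *v x))" for x
      by (simp add: matrix_vector_mult_add_rdistrib scaleR_matrix_vector_assoc[symmetric]
          inner_add_right)
    have "0 \<le> x \<bullet> ((P + s *\<^sub>R D) *v x)" "x \<bullet> ((P + s *\<^sub>R D) *v x) \<le> x \<bullet> x" for x
      using lower[of x] upper[of x] small[of x] by (simp_all add: quad abs_le_iff)
    moreover have "transpose (P + s *\<^sub>R D) = P + s *\<^sub>R D"
      using P D(1) unfolding Fantope_def psd_def by (simp add: transpose_add transpose_scalar)
    moreover have "trace (P + s *\<^sub>R D) \<le> k"
      using P D(2) unfolding Fantope_def by (simp add: trace_add trace_scaleR)
    ultimately show ?thesis unfolding Fantope_def psd_def by blast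
  qed
  moreover have "\<mu> / (\<bar>C\<bar> + 1) > 0" using \<mu> by simp
  ultimately show ?thesis using that by blast
qed

lemma extreme_point_add_diff_eq_0:
  fixes x d :: "'a::real_vector"
  assumes "x extreme_point_of S" "x + d \<in> S" "x - d \<in> S"
  shows "d = 0"
proof (rule ccontr)
  assume "d \<noteq> 0"
  then have "x + d \<noteq> x - d" by (simp add: scaleR_2[symmetric] algebra_simps)
  then have "midpoint (x + d) (x - d) \<in> open_segment (x + d) (x - d)"
    by (simp add: midpoint_in_open_segment)
  moreover have "midpoint (x + d) (x - d) = x"
    by (simp add: midpoint_def scaleR_2[symmetric] algebra_simps)
  ultimately show False using assms unfolding extreme_point_of_def by auto
qed

lemma card_le_if_sum_le:
  fixes f :: "'a \<Rightarrow> real"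
  assumes "finite N" "\<forall>b\<in>N. 0 < f b \<and> f b \<le> 1" "card {b\<in>N. f b < 1} \<le> 1" "sum f N \<le> real k"
  shows "card N \<le> k"
proof -
  let ?J = "{b\<in>N. f b < 1}"
  have "(\<Sum>b\<in>N. 1 - f b) = (\<Sum>b\<in>?J. 1 - f b)"
    using assms(1,2) by (intro sum.mono_neutral_right) auto
  also have "\<dots> < 1"
  proof (cases "?J = {}")
    case True
    show ?thesis unfolding True by simp
  next
    case False
    then have "card ?J = 1" using assms(1,3) by (simp add: le_antisym Suc_leI card_gt_0_iff)
    then obtain j where "?J = {j}" by (rule card_1_singletonE)
    then show ?thesis using assms(2) by auto
  qed
  finally have "real (card N) < real (k + 1)" using assms(4) by (simp add: sum_subtractf)
  then show ?thesis by simp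
qed

lemma extreme_point_Fantope_slice_fractional_eigenvalues:
  fixes P M :: "real^'n^'n"
  assumes ext: "P extreme_point_of (Fantope k \<inter> {Y. M \<bullet> Y = 0})"
    and B: "orthonormal_basis B" "\<forall>b\<in>B. P *v b = l b *\<^sub>R b"
  shows "card {b\<in>B. l b \<in> {0<..<1}} \<le> 1"
proof -
  have P: "P \<in> Fantope k" "M \<bullet> P = 0" using ext unfolding extreme_point_of_def by auto
  have "b1 = b2" if b: "b1 \<in> B" "b2 \<in> B" "l b1 \<in> {0<..<1}" "l b2 \<in> {0<..<1}" for b1 b2
  proof (rule ccontr)
    assume "b1 \<noteq> b2"
    then obtain D C where D: "D \<noteq> 0" "transpose D = D" "trace D = 0" "M \<bullet> D = 0"
      "\<And>x. \<bar>x \<bullet> (D *v x)\<bar> \<le> C * ((x \<bullet> b1)\<^sup>2 + (x \<bullet> b2)\<^sup>2)"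
      using exists_traceless_perturbation orthonormal_basis_inner[OF B(1)] b(1,2) by metis
    obtain \<epsilon> where \<epsilon>: "\<epsilon> > 0" "\<And>s. \<bar>s\<bar> \<le> \<epsilon> \<Longrightarrow> P + s *\<^sub>R D \<in> Fantope k"
      using Fantope_perturbation[OF P(1) B b(1,2) \<open>b1 \<noteq> b2\<close> b(3,4) D(2,3,5)] by blast
    have "P + \<epsilon> *\<^sub>R D \<in> Fantope k \<inter> {Y. M \<bullet> Y = 0}" "P - \<epsilon> *\<^sub>R D \<in> Fantope k \<inter> {Y. M \<bullet> Y = 0}"
      using \<epsilon>(2)[of \<epsilon>] \<epsilon>(2)[of "-\<epsilon>"] \<epsilon>(1) P(2) D(4) by (auto simp: inner_add_right inner_diff_right)
    then have "\<epsilon> *\<^sub>R D = 0" by (rule extreme_point_add_diff_eq_0[OF ext])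
    then show False using \<epsilon>(1) D(1) by simp
  qed
  moreover have "finite {b\<in>B. l b \<in> {0<..<1}}" using B(1) unfolding orthonormal_basis_def by simp
  ultimately show ?thesis by (auto simp: card_le_Suc0_iff_eq)
qed

lemma extreme_point_Fantope_slice_in_Xset:
  fixes P M :: "real^'n^'n"
  assumes ext: "P extreme_point_of (Fantope k \<inter> {Y. M \<bullet> Y = 0})"
  shows "P \<in> Xset k"
proof -
  have psd: "psd P" and le: "\<forall>x. x \<bullet> (P *v x) \<le> x \<bullet> x" and tr: "trace P \<le> k"
    using ext unfolding extreme_point_of_def Fantope_def by auto
  obtain B l where B: "orthonormal_basis B" "\<forall>b\<in>B. P *v b = l b *\<^sub>R b"
    using psd unfolding psd_def by (metis symmetric_matrix_orthonormal_eigenbasis)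
  let ?N = "{b\<in>B. l b \<noteq> 0}"
  have fin: "finite B" using B(1) unfolding orthonormal_basis_def by simp
  have l01: "0 \<le> l b" "l b \<le> 1" if "b \<in> B" for b
    using psd_eigenvalue_nonneg[OF psd B that] eigenvalue_le_1_if_quadratic_form_le[OF le B that]
    by auto
  have "card ?N \<le> k"
  proof (rule card_le_if_sum_le)
    show "finite ?N" using fin by simp
    show "\<forall>b\<in>?N. 0 < l b \<and> l b \<le> 1" using l01 by force
    have "{b\<in>?N. l b < 1} = {b\<in>B. l b \<in> {0<..<1}}" using l01 by force
    then show "card {b\<in>?N. l b < 1} \<le> 1"
      using extreme_point_Fantope_slice_fractional_eigenvalues[OF ext B] by simp
    have "sum l ?N = trace P"
      unfolding eigenbasis_trace[OF B] using fin by (intro sum.mono_neutral_left) auto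
    then show "sum l ?N \<le> real k" using tr by simp
  qed
  then have "rank P \<le> k" by (simp add: eigenbasis_rank[OF B])
  then show ?thesis
    using psd spec_norm_le_1_if_quadratic_form_le[OF psd le] unfolding Xset_def by simp
qed

lemma Fantope_slice_subset_convex_hull_Xset:
  "Fantope k \<inter> {Y. M \<bullet> Y = 0} \<subseteq> convex hull (Xset k \<inter> {Y. M \<bullet> Y = 0})"
proof -
  let ?K = "Fantope k \<inter> {Y. M \<bullet> Y = 0}"
  have "?K = convex hull {P. P extreme_point_of ?K}"
    by (rule Krein_Milman_Minkowski[OF compact_Fantope_slice
          convex_Int[OF convex_Fantope convex_hyperplane]])
  also have "\<dots> \<subseteq> convex hull (Xset k \<inter> {Y. M \<bullet> Y = 0})"
  proof (rule hull_mono, rule subsetI)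
    fix P assume "P \<in> {P. P extreme_point_of ?K}"
    then have ext: "P extreme_point_of ?K" by simp
    then have "M \<bullet> P = 0" unfolding extreme_point_of_def by simp
    then show "P \<in> Xset k \<inter> {Y. M \<bullet> Y = 0}"
      using extreme_point_Fantope_slice_in_Xset[OF ext] by simp
  qed
  finally show ?thesis .
qed

section \<open>The relaxation for constraints spanned by two PSD matrices\<close>

lemma closure_convex_hull_Xset_subset_Fantope: "closure (convex hull (Xset k)) \<subseteq> Fantope k"
  by (intro closure_minimal hull_minimal Xset_subset_Fantope convex_Fantope closed_Fantope)

lemma Crel_eq_Int_halfspaces:
  "Crel k m A = (UNIV \<times> closure (convex hull (Xset k))) \<inter> (\<Inter>i<m. {p. (1, - A i) \<bullet> p \<le> 0})"
  by (auto simp: Crel_def minner_eq_inner inner_prod_def)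

lemma closure_convex_hull_Cset_subset_Crel: "closure (convex hull (Cset k m A)) \<subseteq> Crel k m A"
proof (intro closure_minimal hull_minimal)
  show "Cset k m A \<subseteq> Crel k m A"
    unfolding Cset_def Crel_def using closure_subset hull_inc by fastforce
  show "convex (Crel k m A)"
    unfolding Crel_eq_Int_halfspaces
    by (intro convex_Int convex_Times convex_INT convex_UNIV convex_closure convex_convex_hull
        convex_halfspace_le)
  show "closed (Crel k m A)"
    unfolding Crel_eq_Int_halfspaces
    by (intro closed_Int closed_Times closed_INT closed_UNIV closed_closure ballI
        closed_halfspace_le)
qed

lemma inner_span_pair_scaled:
  fixes u v x :: "'a::real_inner"
  assumes "x \<in> span {u, v}" "u \<bullet> y = t * (u \<bullet> p)" "v \<bullet> y = t * (v \<bullet> p)"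
  shows "x \<bullet> y = t * (x \<bullet> p)"
proof -
  obtain a where "x - a *\<^sub>R u \<in> span {v}" using assms(1) span_breakdown_eq by blast
  then obtain b where "x - a *\<^sub>R u = b *\<^sub>R v" using span_singleton by blast
  then have "x = a *\<^sub>R u + b *\<^sub>R v" by (simp add: algebra_simps)
  then show ?thesis using assms(2,3) by (simp add: inner_add_left algebra_simps)
qed

lemma scaled_point_in_Cset:
  fixes U V :: "real^'n^'n"
  assumes "A ` {..<m} \<subseteq> span {U, V}" "\<forall>i<m. z \<le> A i \<bullet> P"
    and "Y \<in> Xset k" "0 \<le> t" "U \<bullet> Y = t * (U \<bullet> P)" "V \<bullet> Y = t * (V \<bullet> P)"
  shows "(z * t, Y) \<in> Cset k m A"
proof -
  have "z * t \<le> A i \<bullet> Y" if "i < m" for i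
  proof -
    have "A i \<bullet> Y = t * (A i \<bullet> P)"
      using assms(1) that by (intro inner_span_pair_scaled[OF _ assms(5,6)]) auto
    then show ?thesis using assms(2,4) that by (simp add: mult_left_mono mult.commute)
  qed
  then show ?thesis using assms(3) unfolding Cset_def minner_eq_inner by simp
qed

lemma proportional_pair:
  fixes w1 w2 y1 y2 :: real
  assumes "w1 \<noteq> 0 \<or> w2 \<noteq> 0" "w2 * y1 = w1 * y2"
  defines "t \<equiv> (w1 * y1 + w2 * y2) / (w1\<^sup>2 + w2\<^sup>2)"
  shows "y1 = t * w1" "y2 = t * w2"
proof -
  have pos: "w1\<^sup>2 + w2\<^sup>2 \<noteq> 0" using assms(1) by (simp add: add_nonneg_eq_0_iff)
  have "y1 * (w1\<^sup>2 + w2\<^sup>2) = w1 * (w1 * y1 + w2 * y2)" "y2 * (w1\<^sup>2 + w2\<^sup>2) = w2 * (w1 * y1 + w2 * y2)"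
    using assms(2) by (simp_all add: power2_eq_square algebra_simps)
  then show "y1 = t * w1" "y2 = t * w2" using pos unfolding t_def by (simp_all add: field_simps)
qed

lemma Crel_point_in_convex_hull_Cset_degenerate:
  fixes U V :: "real^'n^'n"
  assumes "psd U" "psd V" "A ` {..<m} \<subseteq> span {U, V}"
    and "P \<in> Fantope k" "U \<bullet> P = 0" "V \<bullet> P = 0" "\<forall>i<m. z \<le> A i \<bullet> P"
  shows "(z, P) \<in> convex hull (Cset k m A)"
proof -
  let ?S = "Xset k \<inter> {Y. (U + V) \<bullet> Y = 0}"
  have "P \<in> Fantope k \<inter> {Y. (U + V) \<bullet> Y = 0}" using assms(4-6) by (simp add: inner_add_left)
  then have "P \<in> convex hull ?S" by (rule subsetD[OF Fantope_slice_subset_convex_hull_Xset])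
  then have "(z, P) \<in> convex hull ({z} \<times> ?S)" by (simp add: convex_hull_Times)
  moreover have "{z} \<times> ?S \<subseteq> Cset k m A"
  proof clarify
    fix Y assume Y: "Y \<in> Xset k" "(U + V) \<bullet> Y = 0"
    then have "psd Y" unfolding Xset_def by simp
    then have "U \<bullet> Y = 1 * (U \<bullet> P)" "V \<bullet> Y = 1 * (V \<bullet> P)"
      using Y(2) assms(5,6) inner_psd_nonneg[OF assms(1)] inner_psd_nonneg[OF assms(2)]
      by (simp_all add: inner_add_left add_nonneg_eq_0_iff)
    from scaled_point_in_Cset[OF assms(3,7) Y(1) _ this] show "(z, Y) \<in> Cset k m A" by simp
  qed
  ultimately show ?thesis by (rule rev_subsetD[OF _ hull_mono])
qed

lemma Crel_point_in_convex_hull_Cset_nondegenerate: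
  fixes U V :: "real^'n^'n"
  assumes "psd U" "psd V" "A ` {..<m} \<subseteq> span {U, V}"
    and "P \<in> Fantope k" "U \<bullet> P \<noteq> 0 \<or> V \<bullet> P \<noteq> 0" "\<forall>i<m. z \<le> A i \<bullet> P"
  shows "(z, P) \<in> convex hull (Cset k m A)"
proof -
  define w1 w2 where "w1 = U \<bullet> P" and "w2 = V \<bullet> P"
  define t where "t Y = (w1 * (U \<bullet> Y) + w2 * (V \<bullet> Y)) / (w1\<^sup>2 + w2\<^sup>2)" for Y
  define \<Phi> where "\<Phi> Y = (z * t Y, Y)" for Y
  let ?S = "Xset k \<inter> {Y. (w2 *\<^sub>R U - w1 *\<^sub>R V) \<bullet> Y = 0}"
  have w: "w1 \<noteq> 0 \<or> w2 \<noteq> 0" "0 \<le> w1" "0 \<le> w2"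
    using assms(1,2,4,5) unfolding w1_def w2_def Fantope_def by (auto simp: inner_psd_nonneg)
  have "P \<in> Fantope k \<inter> {Y. (w2 *\<^sub>R U - w1 *\<^sub>R V) \<bullet> Y = 0}"
    using assms(4) unfolding w1_def w2_def by (simp add: inner_diff_left)
  then have "P \<in> convex hull ?S" by (rule subsetD[OF Fantope_slice_subset_convex_hull_Xset])
  moreover have "linear \<Phi>"
    unfolding \<Phi>_def t_def
    by (rule linearI) (simp_all add: inner_add_right algebra_simps add_divide_distrib)
  ultimately have "\<Phi> P \<in> convex hull (\<Phi> ` ?S)" by (simp add: in_convex_hull_linear_image)
  moreover have "t P = 1"
    using w(1) unfolding t_def w1_def[symmetric] w2_def[symmetric] by (simp add: power2_eq_square)
  moreover have "\<Phi> ` ?S \<subseteq> Cset k m A"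
  proof (rule image_subsetI)
    fix Y assume "Y \<in> ?S"
    then have Y: "Y \<in> Xset k" "(w2 *\<^sub>R U - w1 *\<^sub>R V) \<bullet> Y = 0" by simp_all
    have "U \<bullet> Y = t Y * w1" "V \<bullet> Y = t Y * w2"
      using proportional_pair[of w1 w2 "U \<bullet> Y" "V \<bullet> Y"] w(1) Y(2) unfolding t_def
      by (simp_all add: inner_diff_left mult.commute)
    moreover have "0 \<le> t Y"
      using Y(1) w(2,3) assms(1,2) unfolding t_def Xset_def by (simp add: inner_psd_nonneg)
    ultimately show "\<Phi> Y \<in> Cset k m A"
      unfolding \<Phi>_def w1_def w2_def by (intro scaled_point_in_Cset[OF assms(3,6) Y(1)])
  qed
  ultimately show ?thesis unfolding \<Phi>_def using hull_mono by fastforce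
qed

lemma Crel_subset_convex_hull_Cset:
  fixes U V :: "real^'n^'n"
  assumes "psd U" "psd V" "A ` {..<m} \<subseteq> span {U, V}"
  shows "Crel k m A \<subseteq> convex hull (Cset k m A)"
proof clarify
  fix z P assume "(z, P) \<in> Crel k m A"
  then have "P \<in> Fantope k" "\<forall>i<m. z \<le> A i \<bullet> P"
    using closure_convex_hull_Xset_subset_Fantope unfolding Crel_def minner_eq_inner by auto
  then show "(z, P) \<in> convex hull (Cset k m A)"
    using Crel_point_in_convex_hull_Cset_degenerate[OF assms]
      Crel_point_in_convex_hull_Cset_nondegenerate[OF assms]
    by blast
qed

lemma spanning_pair_if_dim_eq_2:
  fixes S :: "'a::euclidean_space set"
  assumes "dim S = 2"
  obtains u v where "u \<in> S" "v \<in> S" "S \<subseteq> span {u, v}"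
proof -
  obtain B where "B \<subseteq> S" "S \<subseteq> span B" "card B = 2"
    using basis_exists[of S] assms by metis
  then show ?thesis using that by (auto simp: card_2_iff)
qed

theorem corollary10:
  fixes k m :: nat and A :: "nat \<Rightarrow> real^'n^'n"
  assumes "1 \<le> k" and "k \<le> CARD('n)"
    and "\<forall>i<m. psd (A i)"
    and "dim (span (A ` {..<m})) = 2"
  shows "Crel k m A = closure (convex hull (Cset k m A))"
proof -
  have "dim (A ` {..<m}) = 2" using assms(4) by simp
  then obtain U V where UV: "U \<in> A ` {..<m}" "V \<in> A ` {..<m}" "A ` {..<m} \<subseteq> span {U, V}"
    by (rule spanning_pair_if_dim_eq_2)
  have "psd U" "psd V" using UV(1,2) assms(3) by auto
  then have "Crel k m A \<subseteq> convex hull (Cset k m A)"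
    using UV(3) by (rule Crel_subset_convex_hull_Cset)
  then have "Crel k m A \<subseteq> closure (convex hull (Cset k m A))"
    using closure_subset by (rule order_trans)
  then show ?thesis
    using closure_convex_hull_Cset_subset_Crel by (rule subset_antisym)
qed

end
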